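(* Let $N$ be a finite set of $n\ge 1$ agents, each with value $v_i\ge 0$ and budget $b_i\ge 0$, and let $m>0$. Let $j$ be an agent chosen uniformly at random from $N$. Then $$\Pr\Big[\mathrm{OPT}(N\setminus\{j\},m)\ \ge\ \tfrac12\,\mathrm{OPT}(N,m)\Big]\ \ge\ 1-\frac1n .$$
   Context: For a set $S$ of agents and an amount $k>0$ of items, the optimal uniform-price revenue is $\mathrm{OPT}(S,k)=\max_{p>0}\ \min\Big(\sum_{i\in S,\ v_i\ge p}\frac{b_i}{p},\ k\Big)\cdot p$, i.e., the maximum revenue from selling at most $k$ items to agents of $S$ at a single price per item $p$, where each agent with $v_i\ge p$ buys as much as her budget allows; $p^\ast_{S,k}$ denotes a maximizing price. *)

theory Defs
  imports "HOL-Probability.Probability"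
begin

definition revenue :: "('a \<Rightarrow> real) \<Rightarrow> ('a \<Rightarrow> real) \<Rightarrow> 'a set \<Rightarrow> real \<Rightarrow> real \<Rightarrow> real" where
  "revenue v b S k p = min (\<Sum>i\<in>{i\<in>S. v i \<ge> p}. b i / p) k * p"

text \<open>Optimal uniform-price revenue OPT(S,k) = max over p > 0 of the revenue
  (rendered as a supremum; the maximum is attained for finite S).\<close>
definition OPT :: "('a \<Rightarrow> real) \<Rightarrow> ('a \<Rightarrow> real) \<Rightarrow> 'a set \<Rightarrow> real \<Rightarrow> real" where
  "OPT v b S k = (SUP p\<in>{0<..}. revenue v b S k p)"

end

theory Submission
  imports Defs
begin

text \<open>For a fixed price p the revenue is min (B, k p), where B is the total budget of the agents
  with value at least p. Removing an agent lowers B by its budget only if it is one of them, and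
  two distinct agents together hold at most B; hence revenue, and then OPT, is subadditive under
  removing either of two distinct agents: OPT(N) \<le> OPT(N - {j1}) + OPT(N - {j2}). So at most one
  agent j can have OPT(N - {j}) < OPT(N)/2, and a uniformly random agent avoids it with
  probability at least 1 - 1/n.\<close>

lemma min_le_min_diff_add_min_diff:
  fixes x c1 c2 K :: real
  assumes "0 \<le> c1" "0 \<le> c2" "c1 + c2 \<le> x" "0 \<le> K"
  shows "min x K \<le> min (x - c1) K + min (x - c2) K"
  using assms by (simp add: min_def)

lemma revenue_eq_min_sum:
  assumes "p > 0"
  shows "revenue v b S k p = min (\<Sum>i\<in>{i\<in>S. v i \<ge> p}. b i) (k * p)"
proof -
  have "min (x / p) k * p = min x (k * p)" for x
    using assms by (simp add: min_def pos_divide_le_eq)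
  then show ?thesis
    unfolding revenue_def sum_divide_distrib[symmetric] by simp
qed

lemma revenue_le_OPT:
  assumes "finite S" "\<And>i. i \<in> S \<Longrightarrow> b i \<ge> 0" "p > 0"
  shows "revenue v b S k p \<le> OPT v b S k"
  unfolding OPT_def
proof (rule cSUP_upper)
  show "p \<in> {0<..}" using assms(3) by simp
  show "bdd_above (revenue v b S k ` {0<..})"
  proof (rule bdd_aboveI2)
    fix q :: real assume "q \<in> {0<..}"
    then have "revenue v b S k q \<le> (\<Sum>i\<in>{i\<in>S. v i \<ge> q}. b i)"
      by (simp add: revenue_eq_min_sum)
    also have "\<dots> \<le> sum b S"
      using assms(1,2) by (intro sum_mono2) auto
    finally show "revenue v b S k q \<le> sum b S" .
  qed
qed

lemma revenue_le_revenue_remove_add: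
  assumes "finite N" "\<And>i. i \<in> N \<Longrightarrow> b i \<ge> 0" "p > 0" "k \<ge> 0" "j1 \<noteq> j2"
  shows "revenue v b N k p \<le> revenue v b (N - {j1}) k p + revenue v b (N - {j2}) k p"
proof -
  define A where "A = {i\<in>N. v i \<ge> p}"
  define c where "c j = (if j \<in> A then b j else 0)" for j
  have "finite A" using assms(1) by (simp add: A_def)
  have buyers_remove: "{i\<in>N - {j}. v i \<ge> p} = A - {j}" for j
    by (auto simp: A_def)
  have sum_remove: "sum b (A - {j}) = sum b A - c j" for j
    using \<open>finite A\<close> by (simp add: c_def sum_diff1)
  have c_nonneg: "c j \<ge> 0" for j
    using assms(2) by (simp add: c_def A_def)
  have "c j1 + c j2 = sum b (A \<inter> {j1, j2})"
    using assms(5) by (auto simp: c_def Int_insert_right)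
  also have "\<dots> \<le> sum b A"
    using \<open>finite A\<close> assms(2) by (intro sum_mono2) (auto simp: A_def)
  finally have "c j1 + c j2 \<le> sum b A" .
  then show ?thesis
    using assms(3,4) c_nonneg
    unfolding revenue_eq_min_sum[OF assms(3)] buyers_remove sum_remove A_def[symmetric]
    by (intro min_le_min_diff_add_min_diff) simp_all
qed

lemma OPT_le_OPT_remove_add:
  assumes "finite N" "\<And>i. i \<in> N \<Longrightarrow> b i \<ge> 0" "k \<ge> 0" "j1 \<noteq> j2"
  shows "OPT v b N k \<le> OPT v b (N - {j1}) k + OPT v b (N - {j2}) k"
  unfolding OPT_def[of v b N]
proof (rule cSUP_least)
  fix p :: real assume "p \<in> {0<..}"
  then have "p > 0" by simp
  have "revenue v b N k p \<le> revenue v b (N - {j1}) k p + revenue v b (N - {j2}) k p"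
    using assms \<open>p > 0\<close> by (intro revenue_le_revenue_remove_add)
  also have "\<dots> \<le> OPT v b (N - {j1}) k + OPT v b (N - {j2}) k"
    using assms(1,2) \<open>p > 0\<close> by (intro add_mono revenue_le_OPT) auto
  finally show "revenue v b N k p \<le> OPT v b (N - {j1}) k + OPT v b (N - {j2}) k" .
qed simp

lemma card_OPT_remove_less_half_le_1:
  assumes "finite N" "\<And>i. i \<in> N \<Longrightarrow> b i \<ge> 0" "k \<ge> 0"
  shows "card {j\<in>N. OPT v b (N - {j}) k < OPT v b N k / 2} \<le> 1"
proof -
  have "j1 = j2"
    if "j1 \<in> N" "OPT v b (N - {j1}) k < OPT v b N k / 2"
       "j2 \<in> N" "OPT v b (N - {j2}) k < OPT v b N k / 2" for j1 j2
  proof (rule ccontr)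
    assume "j1 \<noteq> j2"
    then have "OPT v b N k \<le> OPT v b (N - {j1}) k + OPT v b (N - {j2}) k"
      using assms by (intro OPT_le_OPT_remove_add)
    with that show False by linarith
  qed
  then show ?thesis
    using assms(1) by (auto simp: card_le_Suc0_iff_eq)
qed

lemma prob_pmf_of_set_ge_if_card_compl_le_1:
  assumes "finite N" "N \<noteq> {}" "card (N - G) \<le> 1"
  shows "measure_pmf.prob (pmf_of_set N) G \<ge> 1 - 1 / real (card N)"
proof -
  have "card N > 0" using assms(1,2) by (simp add: card_gt_0_iff)
  have "card (N \<inter> G) + card (N - G) = card N"
    using assms(1) by (metis card_Int_Diff)
  then have "real (card N) - 1 \<le> real (card (N \<inter> G))"
    using assms(3) by linarith
  then have "(real (card N) - 1) / real (card N) \<le> real (card (N \<inter> G)) / real (card N)"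
    by (simp add: divide_right_mono)
  then have "1 - 1 / real (card N) \<le> real (card (N \<inter> G)) / real (card N)"
    using \<open>card N > 0\<close> by (simp add: diff_divide_distrib)
  also have "\<dots> = measure_pmf.prob (pmf_of_set N) G"
    using assms(1,2) by (simp add: measure_pmf_of_set)
  finally show ?thesis .
qed

theorem lemma2:
  fixes N :: "'a set" and v b :: "'a \<Rightarrow> real" and m :: real
  assumes "finite N" and "N \<noteq> {}"
    and "\<And>i. i \<in> N \<Longrightarrow> v i \<ge> 0"
    and "\<And>i. i \<in> N \<Longrightarrow> b i \<ge> 0"
    and "m > 0"
  shows "measure_pmf.prob (pmf_of_set N) {j. OPT v b (N - {j}) m \<ge> OPT v b N m / 2}
           \<ge> 1 - 1 / real (card N)"
proof (rule prob_pmf_of_set_ge_if_card_compl_le_1)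
  have "N - {j. OPT v b (N - {j}) m \<ge> OPT v b N m / 2}
          = {j\<in>N. OPT v b (N - {j}) m < OPT v b N m / 2}"
    by auto
  then show "card (N - {j. OPT v b (N - {j}) m \<ge> OPT v b N m / 2}) \<le> 1"
    using card_OPT_remove_less_half_le_1[OF assms(1,4)] assms(5) by simp
qed (use assms(1,2) in auto)

end
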